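(* Let $F$ be a Pythagorean formally real field with finitely many orderings, let $\sigma_1,\dots,\sigma_n\in X_F$ form a basis (i.e. their characters form a basis of $\chi(\dot F/\dot F^2)$ and every element of $X_F$ is a product of an odd number of them), and let $\tau\in\mathcal G_F$ be such that $\chi_\tau\sigma_i\in X_F$ for all $i=1,\dots,n$. Then $\chi_\tau X_F=X_F$.
   Context: $F$ has characteristic $0$; Pythagorean: every sum of two squares is a square; formally real: $-1$ is not a sum of squares. $\mathcal G_F=\mathrm{Gal}(F^{(3)}/F)$ is the W-group, where $F^{(2)}=F(\sqrt a:a\in\dot F)$ and $F^{(3)}$ is the compositum of all quadratic extensions $K$ of $F^{(2)}$ with $K/F$ Galois. $X_F$ is the set of orderings of $F$, each ordering $P$ identified with its signature character $\operatorname{sgn}_P\in\chi(\dot F/\dot F^2)=\mathrm{Hom}(\dot F/\dot F^2,\{\pm1\})$ ($\operatorname{sgn}_P(a)=1$ iff $a\in P$). For $\tau\in\mathcal G_F$, $\chi_\tau\in\chi(\dot F/\dot F^2)$ is the character $a\mapsto\tau(\sqrt a)/\sqrt a$; products of characters are pointwise. *)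

theory Defs
  imports Main
begin

definition is_ordering :: "'a::field set \<Rightarrow> bool" where
  "is_ordering P \<longleftrightarrow>
     (\<forall>x\<in>P. \<forall>y\<in>P. x + y \<in> P \<and> x * y \<in> P) \<and>
     (\<forall>x. x \<in> P \<or> - x \<in> P) \<and>
     (\<forall>x. x \<in> P \<and> - x \<in> P \<longrightarrow> x = 0)"

text \<open>They are normalised to the value 1 at 0 so that they are
  determined by their values on nonzero elements.  (Multiplicativity forces triviality
  on squares, so these are exactly the characters of the multiplicative group modulo squares.)\<close>
definition sq_char :: "('a::field \<Rightarrow> int) \<Rightarrow> bool" where
  "sq_char c \<longleftrightarrow> (\<forall>a. c a = 1 \<or> c a = -1) \<and> c 0 = 1 \<and>
     (\<forall>a b. a \<noteq> 0 \<longrightarrow> b \<noteq> 0 \<longrightarrow> c (a * b) = c a * c b)"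

definition sgn_ord :: "'a::field set \<Rightarrow> 'a \<Rightarrow> int" where
  "sgn_ord P a = (if a \<noteq> 0 \<and> a \<notin> P then -1 else 1)"

definition X_F :: "('a::field \<Rightarrow> int) set" where
  "X_F = {sgn_ord P | P. is_ordering P}"

definition char_mult :: "('a \<Rightarrow> int) \<Rightarrow> ('a \<Rightarrow> int) \<Rightarrow> 'a \<Rightarrow> int" where
  "char_mult c d = (\<lambda>a. c a * d a)"

definition char_prod :: "(nat \<Rightarrow> 'a \<Rightarrow> int) \<Rightarrow> nat set \<Rightarrow> 'a \<Rightarrow> int" where
  "char_prod \<sigma> S = (\<lambda>a. \<Prod>i\<in>S. \<sigma> i a)"

definition pythagorean :: "'a::field itself \<Rightarrow> bool" where
  "pythagorean _ \<longleftrightarrow> (\<forall>a b :: 'a. \<exists>c. a\<^sup>2 + b\<^sup>2 = c\<^sup>2)"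

definition formally_real :: "'a::field itself \<Rightarrow> bool" where
  "formally_real _ \<longleftrightarrow> \<not> (\<exists>xs :: 'a list. - 1 = sum_list (map (\<lambda>x. x\<^sup>2) xs))"

definition ord_basis :: "(nat \<Rightarrow> 'a::field \<Rightarrow> int) \<Rightarrow> nat \<Rightarrow> bool" where
  "ord_basis \<sigma> n \<longleftrightarrow>
     (\<forall>i<n. \<sigma> i \<in> X_F) \<and>
     (\<forall>c. sq_char c \<longrightarrow> (\<exists>!S. S \<subseteq> {..<n} \<and> c = char_prod \<sigma> S)) \<and>
     (\<forall>x\<in>X_F. \<exists>S. S \<subseteq> {..<n} \<and> odd (card S) \<and> x = char_prod \<sigma> S)"

end

theory Submission
  imports Defs
begin

text \<open>A square-class character \<open>c\<close> is the signature of an ordering iff \<open>c (-1) = -1\<close> and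
  its kernel is closed under \<open>u \<mapsto> 1 + u\<close>; the kernel is then the positive cone.  For a product
  \<open>x\<close> of an odd number of the \<open>\<sigma>\<^sub>i\<close>, the closure condition for \<open>\<chi> x\<close> at \<open>u\<close> only involves the
  signs of \<open>\<chi>\<close> and the \<open>\<sigma>\<^sub>i\<close> at \<open>u\<close> and \<open>1 + u\<close>, and a case distinction on the two signs of \<open>\<chi>\<close>
  derives it from the closure conditions for \<open>x\<close>, the \<open>\<sigma>\<^sub>i\<close> and the \<open>\<chi> \<sigma>\<^sub>i\<close>.  Hence \<open>\<chi> X\<^sub>F \<subseteq> X\<^sub>F\<close>,
  with equality because multiplication by \<open>\<chi>\<close> is an involution.\<close>

definition ordering_char :: "('a::field \<Rightarrow> int) \<Rightarrow> bool" where
  "ordering_char c \<longleftrightarrow> sq_char c \<and> c (-1) = -1 \<and> (\<forall>u. c u = 1 \<longrightarrow> c (1 + u) = 1)"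

lemma is_orderingD:
  assumes "is_ordering P"
  shows is_ordering_add: "x \<in> P \<Longrightarrow> y \<in> P \<Longrightarrow> x + y \<in> P"
    and is_ordering_mult: "x \<in> P \<Longrightarrow> y \<in> P \<Longrightarrow> x * y \<in> P"
    and is_ordering_total: "x \<in> P \<or> - x \<in> P"
    and is_ordering_antisym: "x \<in> P \<Longrightarrow> - x \<in> P \<Longrightarrow> x = 0"
  using assms unfolding is_ordering_def by blast+

lemma is_ordering_one: "is_ordering P \<Longrightarrow> 1 \<in> P"
  using is_ordering_total[of P 1] is_ordering_mult[of P "-1" "-1"] by auto

lemma is_ordering_neg_iff:
  assumes "is_ordering P" "x \<noteq> 0"
  shows "- x \<in> P \<longleftrightarrow> x \<notin> P"
  using assms is_ordering_total is_ordering_antisym by blast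

lemma is_ordering_mult_iff:
  assumes P: "is_ordering P" and "a \<noteq> 0" "b \<noteq> 0"
  shows "a * b \<in> P \<longleftrightarrow> (a \<in> P \<longleftrightarrow> b \<in> P)"
proof -
  have "a * b \<in> P" if "a \<in> P \<longleftrightarrow> b \<in> P"
    using that is_ordering_mult[OF P, of a b] is_ordering_mult[OF P, of "-a" "-b"]
      is_ordering_neg_iff[OF P] assms by auto
  moreover have "- (a * b) \<in> P" if "\<not> (a \<in> P \<longleftrightarrow> b \<in> P)"
    using that is_ordering_mult[OF P, of "-a" b] is_ordering_mult[OF P, of a "-b"]
      is_ordering_neg_iff[OF P] assms by auto
  ultimately show ?thesis
    using is_ordering_neg_iff[OF P, of "a * b"] assms by auto
qed

lemma ordering_char_sgn_ord:
  assumes P: "is_ordering P"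
  shows "ordering_char (sgn_ord P)"
proof -
  have "sq_char (sgn_ord P)"
    unfolding sq_char_def sgn_ord_def using is_ordering_mult_iff[OF P] by auto
  moreover have "sgn_ord P (-1) = -1"
    using is_ordering_neg_iff[OF P, of 1] is_ordering_one[OF P] by (simp add: sgn_ord_def)
  moreover have "sgn_ord P (1 + u) = 1" if "sgn_ord P u = 1" for u
  proof -
    have "u \<in> P"
      using that is_ordering_total[OF P, of 0] by (auto simp: sgn_ord_def split: if_splits)
    then show ?thesis
      using is_ordering_add[OF P] is_ordering_one[OF P] by (simp add: sgn_ord_def)
  qed
  ultimately show ?thesis unfolding ordering_char_def by blast
qed

lemma sq_charD:
  assumes "sq_char c"
  shows sq_char_sign: "c a = 1 \<or> c a = -1"
    and sq_char_zero: "c 0 = 1"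
    and sq_char_mult: "a \<noteq> 0 \<Longrightarrow> b \<noteq> 0 \<Longrightarrow> c (a * b) = c a * c b"
  using assms unfolding sq_char_def by blast+

lemma sq_char_one:
  assumes "sq_char c"
  shows "c 1 = 1"
proof -
  have "c 1 = c 1 * c 1"
    using sq_char_mult[OF assms, of 1 1] by simp
  then show ?thesis
    using sq_char_sign[OF assms, of 1] by auto
qed

lemma sq_char_inverse:
  assumes c: "sq_char c" and "x \<noteq> 0"
  shows "c (inverse x) = c x"
proof -
  have "c x * c (inverse x) = 1"
    using sq_char_mult[OF c, of x "inverse x"] sq_char_one[OF c] \<open>x \<noteq> 0\<close> by simp
  then show ?thesis
    using sq_char_sign[OF c, of x] sq_char_sign[OF c, of "inverse x"] by auto
qed

lemma is_ordering_ordering_char_kernel: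
  assumes c: "ordering_char c"
  shows "is_ordering {a. c a = 1}"
proof -
  have sq: "sq_char c" and neg1: "c (-1) = -1" and step: "\<And>u. c u = 1 \<Longrightarrow> c (1 + u) = 1"
    using c unfolding ordering_char_def by blast+
  note sign = sq_char_sign[OF sq] and mult = sq_char_mult[OF sq] and c0 = sq_char_zero[OF sq]
  have neg: "c (- x) = - c x" if "x \<noteq> 0" for x
    using mult[of "-1" x] neg1 that by simp
  have mult_mem: "c (x * y) = 1" if "c x = 1" "c y = 1" for x y
    using that c0 mult[of x y] by (cases "x = 0"; cases "y = 0") simp_all
  have add_mem: "c (x + y) = 1" if x: "c x = 1" and y: "c y = 1" for x y
  proof (cases "x = 0")
    case False
    \<comment> \<open>\<open>x + y = x (1 + y/x)\<close> reduces additivity to the closure condition\<close>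
    have "c (y * inverse x) = 1"
      using mult_mem[OF y] sq_char_inverse[OF sq False] x by simp
    then have "c (x * (1 + y * inverse x)) = 1"
      using mult_mem[OF x step] by blast
    moreover have "x * (1 + y * inverse x) = x + y"
      using False by (simp add: field_simps)
    ultimately show ?thesis by simp
  qed (simp add: y)
  have total: "c x = 1 \<or> c (- x) = 1" for x
    using neg[of x] sign[of x] c0 by (cases "x = 0") auto
  have antisym: "x = 0" if "c x = 1" "c (- x) = 1" for x
    using that neg[of x] by (cases "x = 0") auto
  show ?thesis
    unfolding is_ordering_def mem_Collect_eq
    using mult_mem add_mem total antisym by (intro conjI ballI allI impI) blast+
qed

lemma sgn_ord_ordering_char_kernel:
  assumes "ordering_char c"
  shows "sgn_ord {a. c a = 1} = c"
proof
  fix a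
  show "sgn_ord {a. c a = 1} a = c a"
    using assms sq_char_sign[of c a] sq_char_zero[of c]
    unfolding ordering_char_def sgn_ord_def by auto
qed

lemma X_F_eq: "X_F = {c :: 'a::field \<Rightarrow> int. ordering_char c}"
proof (intro set_eqI iffI)
  fix c :: "'a \<Rightarrow> int"
  assume "c \<in> X_F"
  then show "c \<in> {c. ordering_char c}"
    unfolding X_F_def using ordering_char_sgn_ord by auto
next
  fix c :: "'a \<Rightarrow> int"
  assume "c \<in> {c. ordering_char c}"
  then have "c = sgn_ord {a. c a = 1} \<and> is_ordering {a. c a = 1}"
    using sgn_ord_ordering_char_kernel is_ordering_ordering_char_kernel by auto
  then show "c \<in> X_F"
    unfolding X_F_def by blast
qed

lemma odd_prod_sign_step:
  fixes s t :: "'i \<Rightarrow> int" and a b :: int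
  assumes odd: "odd (card S)"
    and a: "a = 1 \<or> a = -1" and b: "b = 1 \<or> b = -1"
    and s: "\<And>i. i \<in> S \<Longrightarrow> s i = 1 \<or> s i = -1"
    and step: "\<And>i. i \<in> S \<Longrightarrow> s i = 1 \<Longrightarrow> t i = 1"
    and twisted_step: "\<And>i. i \<in> S \<Longrightarrow> a * s i = 1 \<Longrightarrow> b * t i = 1"
    and prod_step: "prod s S = 1 \<Longrightarrow> prod t S = 1"
    and twisted: "a * prod s S = 1"
  shows "b * prod t S = 1"
  using a b
proof (elim disjE)
  assume "a = 1" "b = 1"
  then show ?thesis using prod_step twisted by simp
next
  assume "a = 1" "b = -1"
  then have "s i = -1" if "i \<in> S" for i
    using s[OF that] step[OF that] twisted_step[OF that] by auto
  then have "prod s S = -1"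
    using odd by simp
  with \<open>a = 1\<close> twisted show ?thesis by simp
next
  assume "a = -1" "b = 1"
  then have "t i = 1" if "i \<in> S" for i
    using s[OF that] step[OF that] twisted_step[OF that] by auto
  with \<open>b = 1\<close> show ?thesis by simp
next
  assume "a = -1" "b = -1"
  then have "t i = s i" if "i \<in> S" for i
    using s[OF that] step[OF that] twisted_step[OF that] by auto
  then have "prod t S = prod s S"
    by (rule prod.cong[OF refl])
  with \<open>a = -1\<close> \<open>b = -1\<close> twisted show ?thesis by simp
qed

lemma sq_char_char_mult:
  assumes "sq_char c" "sq_char d"
  shows "sq_char (char_mult c d)"
proof -
  have "c a * d a = 1 \<or> c a * d a = -1" for a
    using sq_char_sign[OF assms(1), of a] sq_char_sign[OF assms(2), of a] by auto
  then show ?thesis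
    using assms unfolding sq_char_def char_mult_def by (simp add: algebra_simps)
qed

lemma char_mult_involution:
  assumes "sq_char c"
  shows "char_mult c (char_mult c d) = d"
proof
  fix a
  show "char_mult c (char_mult c d) a = d a"
    using sq_char_sign[OF assms, of a] by (auto simp: char_mult_def)
qed

lemma ordering_char_char_mult_odd_prod:
  fixes \<chi> :: "'a::field \<Rightarrow> int" and \<sigma> :: "nat \<Rightarrow> 'a \<Rightarrow> int"
  assumes \<chi>: "sq_char \<chi>" and odd: "odd (card S)"
    and \<sigma>: "\<And>i. i \<in> S \<Longrightarrow> ordering_char (\<sigma> i)"
    and \<chi>\<sigma>: "\<And>i. i \<in> S \<Longrightarrow> ordering_char (char_mult \<chi> (\<sigma> i))"
    and x: "ordering_char (char_prod \<sigma> S)"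
  shows "ordering_char (char_mult \<chi> (char_prod \<sigma> S))"
proof -
  obtain i0 where "i0 \<in> S"
    using odd by fastforce
  then have "\<chi> (-1) = 1"
    using \<sigma>[of i0] \<chi>\<sigma>[of i0] unfolding ordering_char_def char_mult_def by auto
  moreover have "\<chi> (1 + u) * char_prod \<sigma> S (1 + u) = 1"
    if "\<chi> u * char_prod \<sigma> S u = 1" for u
    unfolding char_prod_def
  proof (rule odd_prod_sign_step[OF odd])
    show "\<chi> u * (\<Prod>i\<in>S. \<sigma> i u) = 1"
      using that by (simp add: char_prod_def)
    show "(\<Prod>i\<in>S. \<sigma> i u) = 1 \<Longrightarrow> (\<Prod>i\<in>S. \<sigma> i (1 + u)) = 1"
      using x unfolding ordering_char_def char_prod_def by blast
    show "\<sigma> i u = 1 \<or> \<sigma> i u = -1" "\<sigma> i u = 1 \<Longrightarrow> \<sigma> i (1 + u) = 1" if "i \<in> S" for i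
      using \<sigma>[OF that] sq_char_sign[of "\<sigma> i" u] unfolding ordering_char_def by auto
    show "\<chi> u * \<sigma> i u = 1 \<Longrightarrow> \<chi> (1 + u) * \<sigma> i (1 + u) = 1" if "i \<in> S" for i
      using \<chi>\<sigma>[OF that] unfolding ordering_char_def char_mult_def by blast
  qed (use sq_char_sign[OF \<chi>] in auto)
  ultimately show ?thesis
    using sq_char_char_mult[OF \<chi>] x unfolding ordering_char_def char_mult_def by simp
qed

lemma ord_basisD:
  assumes "ord_basis \<sigma> n"
  shows ord_basis_mem_X_F: "i < n \<Longrightarrow> \<sigma> i \<in> X_F"
    and ord_basis_odd_prod: "x \<in> X_F \<Longrightarrow> \<exists>S\<subseteq>{..<n}. odd (card S) \<and> x = char_prod \<sigma> S"
proof -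
  have "(\<forall>i<n. \<sigma> i \<in> X_F) \<and> (\<forall>x\<in>X_F. \<exists>S. S \<subseteq> {..<n} \<and> odd (card S) \<and> x = char_prod \<sigma> S)"
    using assms unfolding ord_basis_def by (elim conjE) (intro conjI)
  then show "i < n \<Longrightarrow> \<sigma> i \<in> X_F" "x \<in> X_F \<Longrightarrow> \<exists>S\<subseteq>{..<n}. odd (card S) \<and> x = char_prod \<sigma> S"
    by blast+
qed

theorem lemma3p4:
  fixes \<sigma> :: "nat \<Rightarrow> 'a::field_char_0 \<Rightarrow> int" and n :: nat and \<chi> :: "'a \<Rightarrow> int"
  assumes "pythagorean TYPE('a)"
    and "formally_real TYPE('a)"
    and "finite {P :: 'a set. is_ordering P}"
    and "ord_basis \<sigma> n"
    and "sq_char \<chi>"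
    and "\<forall>i<n. char_mult \<chi> (\<sigma> i) \<in> X_F"
  shows "char_mult \<chi> ` X_F = (X_F :: ('a \<Rightarrow> int) set)"
proof -
  have maps_to: "char_mult \<chi> x \<in> X_F" if "x \<in> X_F" for x :: "'a \<Rightarrow> int"
  proof -
    obtain S where S: "S \<subseteq> {..<n}" "odd (card S)" and x: "x = char_prod \<sigma> S"
      using ord_basis_odd_prod[OF assms(4) \<open>x \<in> X_F\<close>] by blast
    have "ordering_char (\<sigma> i)" "ordering_char (char_mult \<chi> (\<sigma> i))" if "i \<in> S" for i
      using ord_basis_mem_X_F[OF assms(4)] assms(6) S(1) that unfolding X_F_eq by auto
    moreover have "ordering_char (char_prod \<sigma> S)"
      using \<open>x \<in> X_F\<close> x unfolding X_F_eq by simp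
    ultimately show ?thesis
      using ordering_char_char_mult_odd_prod[OF assms(5) S(2)] x unfolding X_F_eq by simp
  qed
  show ?thesis
  proof (intro equalityI image_subsetI subsetI)
    fix x :: "'a \<Rightarrow> int"
    assume "x \<in> X_F"
    then show "x \<in> char_mult \<chi> ` X_F"
      using maps_to[OF \<open>x \<in> X_F\<close>] char_mult_involution[OF assms(5), of x] by (metis image_eqI)
  qed (rule maps_to)
qed

end
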